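(* (i) For integers $p\geq 0$, $s,t\geq 1$ and $\max\{s+p+2,\,t+p+2\}\leq n\leq s+t+p+1$, the graph $M_{n,n-1}^{s,t}$ is not $2p$-Hamilton-biconnected. (ii) For integers $p\geq 0$, $s,t\geq 1$ and $n=s+t+p$, the graph $M_{n,n}^{s,t}$ is not $2p$-Hamilton-biconnected. (iii) For integers $p\geq 0$ and $n\geq p+6$, the graph $N_{n,n}^{p,1}$ is not $2p$-Hamilton-biconnected.
   Context: For a bipartite graph $G=(X,Y;E)$: if $|X|=|Y|$ (balanced), $G$ is Hamilton-biconnected if for every $u\in X$, $v\in Y$ there is a Hamiltonian path with ends $u,v$; if $|X|=|Y|+1$ (nearly balanced), $G$ is Hamilton-biconnected if for any two distinct $u,v\in X$ there is a Hamiltonian path with ends $u,v$. A vertex set $W$ is balanced if $|W\cap X|=|W\cap Y|$; $G$ is $2p$-Hamilton-biconnected if for every balanced $W$ with $|W|=2p$, the subgraph induced by $V(G)\setminus W$ is Hamilton-biconnected. $M_{n,m}^{s,t}$: parts $X=X_1\cup X_2$ (with $n$ vertices), $Y=Y_1\cup Y_2$ (with $m$ vertices), $|X_1|=s$, $|X_2|=n-s$, $|Y_1|=m-t$, $|Y_2|=t$; edges are all pairs between $X_1$ and $Y_1$, between $X_2$ and $Y_1$, and between $X_2$ and $Y_2$. $N_{n,n}^{p,1}$: parts $X=X_1\cup X_2\cup X_3$, $Y=Y_1\cup Y_2\cup Y_3$, $|X_1|=|Y_1|=n-p-2$, $|X_2|=|Y_2|=p+1$, $|X_3|=|Y_3|=1$;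 edges are all pairs between $X_i$ and $Y_i$ ($i=1,2,3$), between $X_1$ and $Y_2$, between $X_2$ and $Y_1\cup Y_3$, and between $X_3$ and $Y_2$. *)

theory Defs
  imports Main
begin

text \<open>Subgraphs induced on a vertex set are represented by restricting the
vertex set (a path only uses vertices of that set).\<close>

definition ham_path :: "'a set \<Rightarrow> ('a \<Rightarrow> 'a \<Rightarrow> bool) \<Rightarrow> 'a \<Rightarrow> 'a \<Rightarrow> bool" where
  "ham_path V E u v \<longleftrightarrow>
     (\<exists>ps. ps \<noteq> [] \<and> distinct ps \<and> set ps = V \<and> hd ps = u \<and> last ps = v \<and>
           (\<forall>i. Suc i < length ps \<longrightarrow> E (ps ! i) (ps ! Suc i)))"

definition hamilton_biconnected :: "'a set \<Rightarrow> 'a set \<Rightarrow> ('a \<Rightarrow> 'a \<Rightarrow> bool) \<Rightarrow> bool" where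
  "hamilton_biconnected X Y E \<longleftrightarrow>
     (card X = card Y \<and> (\<forall>u\<in>X. \<forall>v\<in>Y. ham_path (X \<union> Y) E u v)) \<or>
     (card X = card Y + 1 \<and> (\<forall>u\<in>X. \<forall>v\<in>X. u \<noteq> v \<longrightarrow> ham_path (X \<union> Y) E u v))"

definition balanced_set :: "'a set \<Rightarrow> 'a set \<Rightarrow> 'a set \<Rightarrow> bool" where
  "balanced_set X Y W \<longleftrightarrow> card (W \<inter> X) = card (W \<inter> Y)"

definition hamilton_biconnected_2p :: "nat \<Rightarrow> 'a set \<Rightarrow> 'a set \<Rightarrow> ('a \<Rightarrow> 'a \<Rightarrow> bool) \<Rightarrow> bool" where
  "hamilton_biconnected_2p p X Y E \<longleftrightarrow>
     (\<forall>W. W \<subseteq> X \<union> Y \<and> balanced_set X Y W \<and> card W = 2 * p \<longrightarrow>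
          hamilton_biconnected (X - W) (Y - W) E)"

text \<open>Vertices are pairs (class, index).
 M_{n,m}^{s,t}: X1 = class 0 (s vertices), X2 = class 1 (n-s), Y1 = class 2 (m-t),
 Y2 = class 3 (t).\<close>

definition M_X :: "nat \<Rightarrow> nat \<Rightarrow> (nat \<times> nat) set" where
  "M_X n s = {(0, k) | k. k < s} \<union> {(1, k) | k. k < n - s}"

definition M_Y :: "nat \<Rightarrow> nat \<Rightarrow> (nat \<times> nat) set" where
  "M_Y m t = {(2, k) | k. k < m - t} \<union> {(3, k) | k. k < t}"

definition M_E :: "nat \<times> nat \<Rightarrow> nat \<times> nat \<Rightarrow> bool" where
  "M_E a b \<longleftrightarrow> {fst a, fst b} \<in> {{0, 2}, {1, 2}, {1, 3}}"

text \<open>N_{n,n}^{p,1}: X1,X2,X3 = classes 0,1,2 with sizes n-p-2, p+1, 1;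
 Y1,Y2,Y3 = classes 3,4,5 with the same sizes.\<close>

definition N_X :: "nat \<Rightarrow> nat \<Rightarrow> (nat \<times> nat) set" where
  "N_X n p = {(0, k) | k. k < n - p - 2} \<union> {(1, k) | k. k < p + 1} \<union> {(2, 0)}"

definition N_Y :: "nat \<Rightarrow> nat \<Rightarrow> (nat \<times> nat) set" where
  "N_Y n p = {(3, k) | k. k < n - p - 2} \<union> {(4, k) | k. k < p + 1} \<union> {(5, 0)}"

definition N_E :: "nat \<times> nat \<Rightarrow> nat \<times> nat \<Rightarrow> bool" where
  "N_E a b \<longleftrightarrow> {fst a, fst b} \<in>
     {{0, 3}, {1, 4}, {2, 5}, {0, 4}, {1, 3}, {1, 5}, {2, 4}}"

end

theory Submission
  imports Defs
begin

text \<open>Deleting \<open>p\<close> vertices of \<open>X\<^sub>2\<close> and \<open>p\<close> of \<open>Y\<^sub>1\<close> from \<open>M\<^sub>n\<^sub>,\<^sub>m\<^sup>s\<^sup>,\<^sup>t\<close> leaves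
\<open>M\<^sub>n\<^sub>-\<^sub>p\<^sub>,\<^sub>m\<^sub>-\<^sub>p\<^sup>s\<^sup>,\<^sup>t\<close>, and deleting \<open>p\<close> vertices of \<open>X\<^sub>2\<close> and \<open>p\<close> of \<open>Y\<^sub>2\<close> from
\<open>N\<^sub>n\<^sub>,\<^sub>n\<^sup>p\<^sup>,\<^sup>1\<close> leaves \<open>N\<^sub>n\<^sub>-\<^sub>p\<^sub>,\<^sub>n\<^sub>-\<^sub>p\<^sup>0\<^sup>,\<^sup>1\<close>; so it suffices to exhibit, in these smaller
graphs, two admissible ends joined by no Hamiltonian path.

In \<open>M\<^sup>s\<^sup>,\<^sup>t\<close> the \<open>s + t\<close> vertices of \<open>X\<^sub>1 \<union> Y\<^sub>2\<close> are independent, so a path on \<open>L\<close>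
vertices with both ends outside this set contains at most \<open>(L - 1) / 2\<close> of them, and at most
\<open>(L - 2) / 2\<close> if two consecutive vertices of the path lie outside it. The first bound fails
in the balanced case (ends in \<open>X\<^sub>2\<close> and \<open>Y\<^sub>1\<close>). In the nearly balanced case (both ends in
\<open>X\<^sub>2\<close>) the second one fails and does apply: otherwise the side and the membership in
\<open>X\<^sub>1 \<union> Y\<^sub>2\<close> would switch together along every edge, so the path could not reach \<open>X\<^sub>1\<close>.

In \<open>N\<^sup>0\<^sup>,\<^sup>1\<close> the vertices \<open>x\<^sub>3\<close> and \<open>y\<^sub>3\<close> have degree two, which forces every
Hamiltonian path from \<open>x\<^sub>2\<close> to \<open>y\<^sub>2\<close> to be \<open>x\<^sub>2 y\<^sub>3 x\<^sub>3 y\<^sub>2\<close>.\<close>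

lemma ham_path_iff_successively:
  "ham_path V E u v \<longleftrightarrow>
     (\<exists>ps. ps \<noteq> [] \<and> distinct ps \<and> set ps = V \<and> hd ps = u \<and> last ps = v \<and> successively E ps)"
  unfolding ham_path_def successively_conv_nth ..

lemma not_hamilton_biconnected_2pI:
  assumes "WX \<subseteq> X" "WY \<subseteq> Y" "X \<inter> Y = {}" "finite WX" "finite WY" "card WX = p" "card WY = p"
    and "\<not> hamilton_biconnected (X - WX) (Y - WY) E"
  shows "\<not> hamilton_biconnected_2p p X Y E"
proof -
  have "(WX \<union> WY) \<inter> X = WX" "(WX \<union> WY) \<inter> Y = WY" "X - (WX \<union> WY) = X - WX" "Y - (WX \<union> WY) = Y - WY"
    using assms(1-3) by blast+
  moreover have "card (WX \<union> WY) = 2 * p"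
    using assms(1-7) by (subst card_Un_disjoint) auto
  ultimately show ?thesis
    using assms(1,2,6-8) unfolding hamilton_biconnected_2p_def balanced_set_def by (metis Un_mono)
qed

lemma successively_eq_imp_eq_hd:
  assumes "successively (\<lambda>x y. f x = f y) xs" "x \<in> set xs"
  shows "f x = f (hd xs)"
  using assms by (induction "\<lambda>x y. f x = f y" xs rule: successively.induct) auto

lemma length_filter_successively_not_both:
  assumes "successively (\<lambda>x y. \<not> P x \<or> \<not> P y) xs" "xs \<noteq> []"
  shows "2 * length (filter P xs) + of_bool (\<not> P (hd xs)) + of_bool (\<not> P (last xs))
           + of_bool (\<not> successively (\<lambda>x y. P x \<or> P y) xs) \<le> length xs + 1"
  using assms
proof (induction "\<lambda>x y. \<not> P x \<or> \<not> P y" xs rule: successively.induct)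
  case (3 x y xs)
  then show ?case by (cases "P x"; cases "P y") auto
qed auto

lemma distinct_length_eq_card_Un:
  assumes "distinct ps" "set ps = A \<union> B" "A \<inter> B = {}"
  shows "length ps = card A + card B"
  using assms by (metis distinct_card card_Un_disjoint finite_Un List.finite_set)

lemma distinct_hd_eq_imp_Nil:
  "distinct (ys @ a # zs) \<Longrightarrow> hd (ys @ a # zs) = a \<Longrightarrow> ys = []"
  by (cases ys) auto

lemma distinct_last_eq_imp_Nil:
  "distinct (ys @ a # zs) \<Longrightarrow> last (ys @ a # zs) = a \<Longrightarrow> zs = []"
  by (cases zs rule: rev_exhaust) auto

lemma successively_interiorE:
  assumes "successively E xs" "x \<in> set xs" "x \<noteq> hd xs" "x \<noteq> last xs"
  obtains ys a b zs where "xs = ys @ a # x # b # zs" "E a x" "E x b"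
proof -
  obtain ys0 zs0 where xs: "xs = ys0 @ x # zs0" using split_list[OF assms(2)] by blast
  obtain ys a where "ys0 = ys @ [a]" using assms(3) xs by (cases ys0 rule: rev_exhaust) auto
  moreover obtain b zs where "zs0 = b # zs" using assms(4) xs by (cases zs0) auto
  ultimately show thesis
    using that assms(1) xs by (simp add: successively_append_iff)
qed

lemma M_E_iff:
  "M_E a b \<longleftrightarrow> (fst a \<in> {0, 1} \<and> fst b = 2 \<or> fst a = 1 \<and> fst b = 3)
               \<or> (fst b \<in> {0, 1} \<and> fst a = 2 \<or> fst b = 1 \<and> fst a = 3)"
  unfolding M_E_def by (auto simp: doubleton_eq_iff)

lemma card_Pair_Un_Pair:
  assumes "a \<noteq> b" "finite A" "finite B"
  shows "card (Pair a ` A \<union> Pair b ` B) = card A + card B"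
  using assms by (subst card_Un_disjoint) (auto simp: card_image inj_on_def)

lemma M_X_eq: "M_X n s = Pair 0 ` {..<s} \<union> Pair 1 ` {..<n - s}"
  unfolding M_X_def by auto

lemma M_Y_eq: "M_Y m t = Pair 2 ` {..<m - t} \<union> Pair 3 ` {..<t}"
  unfolding M_Y_def by auto

lemma card_M_X: "s \<le> n \<Longrightarrow> card (M_X n s) = n"
  unfolding M_X_eq by (subst card_Pair_Un_Pair) auto

lemma card_M_Y: "t \<le> m \<Longrightarrow> card (M_Y m t) = m"
  unfolding M_Y_eq by (subst card_Pair_Un_Pair) auto

lemma M_X_Int_M_Y: "M_X n s \<inter> M_Y m t = {}"
  unfolding M_X_def M_Y_def by auto

lemma M_X_diff: "M_X n s - Pair 1 ` {n - s - p..<n - s} = M_X (n - p) s"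
  unfolding M_X_eq by (auto simp: image_iff)

lemma M_Y_diff: "M_Y m t - Pair 2 ` {m - t - p..<m - t} = M_Y (m - p) t"
  unfolding M_Y_eq by (auto simp: image_iff)

lemma M_not_hamilton_biconnected_2pI:
  assumes "p \<le> n - s" "p \<le> m - t"
    and "\<not> hamilton_biconnected (M_X (n - p) s) (M_Y (m - p) t) M_E"
  shows "\<not> hamilton_biconnected_2p p (M_X n s) (M_Y m t) M_E"
proof (rule not_hamilton_biconnected_2pI)
  show "Pair 1 ` {n - s - p..<n - s} \<subseteq> M_X n s" "Pair 2 ` {m - t - p..<m - t} \<subseteq> M_Y m t"
    unfolding M_X_def M_Y_def by auto
  show "card (Pair (1::nat) ` {n - s - p..<n - s}) = p" "card (Pair (2::nat) ` {m - t - p..<m - t}) = p"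
    using assms(1,2) by (simp_all add: card_image inj_on_def)
qed (use assms(3) M_X_Int_M_Y M_X_diff M_Y_diff in auto)

lemma M_ham_path_length_bound:
  assumes "s \<le> n" "t \<le> m"
    and ps: "ps \<noteq> []" "distinct ps" "set ps = M_X n s \<union> M_Y m t" "successively M_E ps"
    and ends: "fst (hd ps) \<in> {1, 2}" "fst (last ps) \<in> {1, 2}"
  shows "2 * (s + t) + 1 + of_bool (\<not> successively (\<lambda>a b. fst a \<in> {0, 3} \<or> fst b \<in> {0, 3}) ps)
           \<le> n + m"
proof -
  define P where "P = (\<lambda>a :: nat \<times> nat. fst a \<in> {0::nat, 3})"
  have "{a. P a} \<inter> set ps = Pair 0 ` {..<s} \<union> Pair 3 ` {..<t}"
    unfolding ps(3) M_X_eq M_Y_eq P_def by auto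
  then have count: "length (filter P ps) = s + t"
    using ps(2) by (simp add: distinct_length_filter card_Pair_Un_Pair)
  have "length ps = card (M_X n s) + card (M_Y m t)"
    using ps(2,3) M_X_Int_M_Y by (rule distinct_length_eq_card_Un)
  then have length: "length ps = n + m"
    using assms(1,2) by (simp add: card_M_X card_M_Y)
  have "successively (\<lambda>a b. \<not> P a \<or> \<not> P b) ps"
    using ps(4) by (rule successively_mono) (auto simp: P_def M_E_iff)
  from length_filter_successively_not_both[OF this ps(1)]
  moreover have "\<not> P (hd ps)" "\<not> P (last ps)" using ends by (auto simp: P_def)
  ultimately have "2 * (s + t) + 1 + of_bool (\<not> successively (\<lambda>a b. P a \<or> P b) ps) \<le> n + m"
    unfolding count length by simp
  then show ?thesis unfolding P_def .
qed

lemma M_balanced_not_hamilton_biconnected: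
  assumes "1 \<le> s" "1 \<le> t"
  shows "\<not> hamilton_biconnected (M_X (s + t) s) (M_Y (s + t) t) M_E"
proof
  assume "hamilton_biconnected (M_X (s + t) s) (M_Y (s + t) t) M_E"
  moreover have "card (M_X (s + t) s) = card (M_Y (s + t) t)"
    by (simp add: card_M_X card_M_Y)
  moreover have "(1, 0) \<in> M_X (s + t) s" "(2, 0) \<in> M_Y (s + t) t"
    using assms by (auto simp: M_X_def M_Y_def)
  ultimately have "ham_path (M_X (s + t) s \<union> M_Y (s + t) t) M_E (1, 0) (2, 0)"
    unfolding hamilton_biconnected_def by auto
  then obtain ps where "ps \<noteq> []" "distinct ps" "set ps = M_X (s + t) s \<union> M_Y (s + t) t"
    "successively M_E ps" "hd ps = (1, 0)" "last ps = (2, 0)"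
    unfolding ham_path_iff_successively by blast
  from M_ham_path_length_bound[OF _ _ this(1-4)] this(5,6) show False by simp
qed

lemma M_nearly_balanced_not_hamilton_biconnected:
  assumes "1 \<le> s" "s + 2 \<le> n" "t < n" "n \<le> s + t + 1"
  shows "\<not> hamilton_biconnected (M_X n s) (M_Y (n - 1) t) M_E"
proof
  assume "hamilton_biconnected (M_X n s) (M_Y (n - 1) t) M_E"
  moreover have "card (M_X n s) = card (M_Y (n - 1) t) + 1"
    using assms by (simp add: card_M_X card_M_Y)
  moreover have "(1, 0) \<in> M_X n s" "(1, 1) \<in> M_X n s"
    using assms by (auto simp: M_X_def)
  ultimately have "ham_path (M_X n s \<union> M_Y (n - 1) t) M_E (1, 0) (1, 1)"
    unfolding hamilton_biconnected_def by auto
  then obtain ps where ps: "ps \<noteq> []" "distinct ps" "set ps = M_X n s \<union> M_Y (n - 1) t"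
    "successively M_E ps" and ends: "hd ps = (1, 0)" "last ps = (1, 1)"
    unfolding ham_path_iff_successively by blast
  have "\<not> successively (\<lambda>a b. fst a \<in> {0, 3} \<or> fst b \<in> {0, 3}) ps"
  proof
    assume "successively (\<lambda>a b. fst a \<in> {0, 3} \<or> fst b \<in> {0, 3}) ps"
    \<comment> \<open>every edge now switches both the side and the membership in \<open>X\<^sub>1 \<union> Y\<^sub>2\<close>\<close>
    then have "successively (\<lambda>a b. (fst a \<in> {0, 3} \<longleftrightarrow> fst a \<le> 1) = (fst b \<in> {0, 3} \<longleftrightarrow> fst b \<le> 1)) ps"
      using ps(4) unfolding successively_conv_nth by (fastforce simp: M_E_iff)
    moreover have "(0, 0) \<in> set ps" using assms(1) ps(3) by (auto simp: M_X_def)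
    ultimately show False
      using successively_eq_imp_eq_hd[where f = "\<lambda>a. fst a \<in> {0, 3} \<longleftrightarrow> fst a \<le> 1"] ends
      by fastforce
  qed
  with M_ham_path_length_bound[of s n t "n - 1", OF _ _ ps] ends assms show False by (simp; arith)
qed

lemma N_E_iff:
  "N_E a b \<longleftrightarrow> (fst a, fst b) \<in> {(0, 3), (1, 4), (2, 5), (0, 4), (1, 3), (1, 5), (2, 4)}
               \<or> (fst b, fst a) \<in> {(0, 3), (1, 4), (2, 5), (0, 4), (1, 3), (1, 5), (2, 4)}"
  unfolding N_E_def by (auto simp: doubleton_eq_iff)

lemma N_X_diff: "N_X n p - Pair 1 ` {1..p} = N_X (n - p) 0"
  unfolding N_X_def by auto

lemma N_Y_diff: "N_Y n p - Pair 4 ` {1..p} = N_Y (n - p) 0"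
  unfolding N_Y_def by auto

lemma N_X_Int_N_Y: "N_X n p \<inter> N_Y n p = {}"
  unfolding N_X_def N_Y_def by auto

lemma N_not_hamilton_biconnected_2pI:
  assumes "\<not> hamilton_biconnected (N_X (n - p) 0) (N_Y (n - p) 0) N_E"
  shows "\<not> hamilton_biconnected_2p p (N_X n p) (N_Y n p) N_E"
proof (rule not_hamilton_biconnected_2pI)
  show "Pair 1 ` {1..p} \<subseteq> N_X n p" "Pair 4 ` {1..p} \<subseteq> N_Y n p"
    unfolding N_X_def N_Y_def by auto
  show "card (Pair (1::nat) ` {1..p}) = p" "card (Pair (4::nat) ` {1..p}) = p"
    by (simp_all add: card_image inj_on_def)
qed (use assms N_X_Int_N_Y N_X_diff N_Y_diff in auto)

lemma N_not_hamilton_biconnected: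
  assumes "3 \<le> n"
  shows "\<not> hamilton_biconnected (N_X n 0) (N_Y n 0) N_E"
proof
  have X: "N_X n 0 = insert (1, 0) (insert (2, 0) (Pair 0 ` {..<n - 2}))"
    and Y: "N_Y n 0 = insert (4, 0) (insert (5, 0) (Pair 3 ` {..<n - 2}))"
    unfolding N_X_def N_Y_def by auto
  have card: "card (N_X n 0) = n" "card (N_Y n 0) = n"
    using assms unfolding X Y by (simp_all add: card_image inj_on_def image_iff)
  assume "hamilton_biconnected (N_X n 0) (N_Y n 0) N_E"
  moreover have "(1, 0) \<in> N_X n 0" "(4, 0) \<in> N_Y n 0" unfolding X Y by auto
  ultimately have "ham_path (N_X n 0 \<union> N_Y n 0) N_E (1, 0) (4, 0)"
    using card unfolding hamilton_biconnected_def by auto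
  then obtain ps where ps: "distinct ps" "set ps = N_X n 0 \<union> N_Y n 0" "successively N_E ps"
    and ends: "hd ps = (1, 0)" "last ps = (4, 0)"
    unfolding ham_path_iff_successively by blast
  have "length ps = 2 * n"
    using distinct_length_eq_card_Un[OF ps(1,2) N_X_Int_N_Y] card by simp
  have classes: "a = (fst a, 0)" if "a \<in> set ps" "fst a \<noteq> 0" "fst a \<noteq> 3" for a
    using that unfolding ps(2) X Y by auto
  \<comment> \<open>\<open>(2, 0)\<close> has the two neighbours \<open>(4, 0)\<close> and \<open>(5, 0)\<close>, and \<open>(5, 0)\<close> the two neighbours
    \<open>(1, 0)\<close> and \<open>(2, 0)\<close>, so the path is forced to be \<open>(1, 0), (5, 0), (2, 0), (4, 0)\<close>\<close>
  have "(2, 0) \<in> set ps" unfolding ps(2) X by simp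
  then obtain ys a b zs where ps_eq: "ps = ys @ a # (2, 0) # b # zs" and "N_E a (2, 0)" "N_E (2, 0) b"
    by (rule successively_interiorE[OF ps(3)]) (use ends in auto)
  then have "a \<in> {(4, 0), (5, 0)}" "b \<in> {(4, 0), (5, 0)}" "a \<noteq> b"
    using classes[of a] classes[of b] ps(1) unfolding ps_eq by (auto simp: N_E_iff)
  then have "a = (5, 0)" "b = (4, 0)" "zs = []"
    using distinct_last_eq_imp_Nil[of ys a "(2, 0) # b # zs"]
      distinct_last_eq_imp_Nil[of "ys @ [a, (2, 0)]" b zs] ps(1) ends(2) unfolding ps_eq by auto
  then have ps_eq': "ps = ys @ [(5, 0), (2, 0), (4, 0)]" using ps_eq by simp
  obtain ys' c where ys: "ys = ys' @ [c]"
    using ends(1) ps_eq' by (cases ys rule: rev_exhaust) auto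
  have "N_E c (5, 0)" using ps(3) unfolding ps_eq' ys by (simp add: successively_append_iff)
  then have "c = (1, 0)"
    using classes[of c] ps(1) unfolding ps_eq' ys by (auto simp: N_E_iff)
  then have "ys' = []"
    using distinct_hd_eq_imp_Nil[of ys' c "[(5, 0), (2, 0), (4, 0)]"] ps(1) ends(1) unfolding ps_eq' ys by auto
  with \<open>length ps = 2 * n\<close> show False using assms unfolding ps_eq' ys by simp
qed

theorem lemma2p8:
  shows "(\<forall>(p::nat) (s::nat) (t::nat) (n::nat).
            1 \<le> s \<and> 1 \<le> t \<and> max (s + p + 2) (t + p + 2) \<le> n \<and> n \<le> s + t + p + 1 \<longrightarrow>
            \<not> hamilton_biconnected_2p p (M_X n s) (M_Y (n - 1) t) M_E)
       \<and> (\<forall>(p::nat) (s::nat) (t::nat) (n::nat).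
            1 \<le> s \<and> 1 \<le> t \<and> n = s + t + p \<longrightarrow>
            \<not> hamilton_biconnected_2p p (M_X n s) (M_Y n t) M_E)
       \<and> (\<forall>(p::nat) (n::nat). p + 6 \<le> n \<longrightarrow>
            \<not> hamilton_biconnected_2p p (N_X n p) (N_Y n p) N_E)"
proof (intro conjI allI impI)
  fix p s t n :: nat
  assume bounds: "1 \<le> s \<and> 1 \<le> t \<and> max (s + p + 2) (t + p + 2) \<le> n \<and> n \<le> s + t + p + 1"
  then have "\<not> hamilton_biconnected (M_X (n - p) s) (M_Y (n - p - 1) t) M_E"
    by (intro M_nearly_balanced_not_hamilton_biconnected) auto
  with bounds show "\<not> hamilton_biconnected_2p p (M_X n s) (M_Y (n - 1) t) M_E"
    by (intro M_not_hamilton_biconnected_2pI) (auto simp: diff_commute)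
next
  fix p s t n :: nat
  assume "1 \<le> s \<and> 1 \<le> t \<and> n = s + t + p"
  then show "\<not> hamilton_biconnected_2p p (M_X n s) (M_Y n t) M_E"
    using M_balanced_not_hamilton_biconnected[of s t]
    by (intro M_not_hamilton_biconnected_2pI) auto
next
  fix p n :: nat
  assume "p + 6 \<le> n"
  then show "\<not> hamilton_biconnected_2p p (N_X n p) (N_Y n p) N_E"
    by (intro N_not_hamilton_biconnected_2pI N_not_hamilton_biconnected) simp
qed

end
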